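(* Let $p$ be an odd prime and $q=p^r$ with $r\ge1$. Let $k\in(\mathbb{Z}/q\mathbb{Z})^\times$ and let $\theta_k:(\mathbb{Z}/q\mathbb{Z})^\times\to(\mathbb{Z}/q\mathbb{Z})^\times$ be multiplication by $k$, $\theta_k(u)=ku$. Let $f:(\mathbb{Z}/q\mathbb{Z})^\times\to\mathbb{R}$ be a function that is monotonic on $[1,q]_\mathbb{Z}$. Then the following are equivalent: (i) $f\circ\theta_k=f$; (ii) $k=1$ or $f$ is constant.
   Context: $[a,b]_\mathbb{Z}$ denotes the set of integers in the closed interval $[a,b]$ not divisible by $p$; $[1,q]_\mathbb{Z}$ is used as the set of representatives of $(\mathbb{Z}/q\mathbb{Z})^\times$, and "$f$ monotonic on $[1,q]_\mathbb{Z}$" means that $i\mapsto f(i\bmod q)$ is monotonic on this set of integers ordered as usual. *)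

theory Defs
  imports Complex_Main "HOL-Computational_Algebra.Primes"
begin

text \<open>The integer interval [a,b] with multiples of p removed; [1,q]_Z serves as the
set of representatives of the unit group of Z/qZ.\<close>
definition int_interval_coprime :: "nat \<Rightarrow> nat \<Rightarrow> nat \<Rightarrow> nat set" where
  "int_interval_coprime p a b = {u. a \<le> u \<and> u \<le> b \<and> \<not> p dvd u}"

definition theta :: "nat \<Rightarrow> nat \<Rightarrow> nat \<Rightarrow> nat" where
  "theta q k u = (k * u) mod q"

end

theory Submission
  imports Defs
begin

text \<open>
  Suppose \<open>f\<close> is increasing and \<open>\<theta>\<^sub>k\<close>-invariant but not constant. The set where \<open>f\<close> attains its
  least value is a proper initial segment \<open>[1,m]\<^sub>\<int>\<close> of the units, and it is mapped onto itself
  by \<open>\<theta>\<^sub>k\<close>, as is its complement; reflecting the complement by \<open>u \<mapsto> q - u\<close> shows that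
  \<open>[1,q-1-m]\<^sub>\<int>\<close> is \<open>\<theta>\<^sub>k\<close>-stable too. One of these two segments has length \<open>m < q/2\<close>. It contains
  \<open>k\<close>, so \<open>k \<le> m\<close>; but as \<open>p\<close> is odd, one of the two least multiples of \<open>k\<close> beyond \<open>m\<close> has a
  cofactor prime to \<open>p\<close>, and it lies in \<open>(m, 2m]\<close>, where no reduction mod \<open>q\<close> takes place.
\<close>

lemma int_interval_coprime_less:
  assumes "p dvd q" "u \<in> int_interval_coprime p 1 q"
  shows "u < q"
  using assms by (auto simp: int_interval_coprime_def le_less)

lemma int_interval_coprime_reflect:
  assumes "p dvd q" "u \<in> int_interval_coprime p 1 q"
  shows "q - u \<in> int_interval_coprime p 1 q"
proof -
  have "u < q" using int_interval_coprime_less[OF assms] .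
  moreover have "\<not> p dvd q - u"
  proof
    assume "p dvd q - u"
    with \<open>p dvd q\<close> have "p dvd q - (q - u)" by (rule dvd_diff_nat)
    with \<open>u < q\<close> assms(2) show False by (simp add: int_interval_coprime_def)
  qed
  ultimately show ?thesis using assms(2) by (auto simp: int_interval_coprime_def)
qed

lemma theta_in_int_interval_coprime:
  assumes "prime p" "p dvd q"
    and "k \<in> int_interval_coprime p 1 q" "u \<in> int_interval_coprime p 1 q"
  shows "theta q k u \<in> int_interval_coprime p 1 q"
proof -
  have "\<not> p dvd theta q k u"
  proof
    assume "p dvd theta q k u"
    with \<open>p dvd q\<close> have "p dvd k * u" by (simp add: theta_def dvd_mod_iff)
    with assms show False by (auto simp: int_interval_coprime_def prime_dvd_mult_nat)
  qed
  moreover from this have "theta q k u \<noteq> 0" by (metis dvd_0_right)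
  moreover have "theta q k u < q"
    using int_interval_coprime_less[OF assms(2,4)] by (simp add: theta_def)
  ultimately show ?thesis by (auto simp: int_interval_coprime_def)
qed

lemma theta_reflect:
  assumes "u \<le> q" "theta q k u \<noteq> 0"
  shows "theta q k (q - u) = q - theta q k u"
proof -
  have "int (theta q k (q - u)) = (int k * (int q - int u)) mod int q"
    using assms(1) by (simp add: theta_def zmod_int of_nat_diff)
  also have "\<dots> = (- (int k * int u) + int k * int q) mod int q"
    by (simp add: algebra_simps)
  also have "\<dots> = (- (int k * int u)) mod int q" by (rule mod_mult_self1)
  also have "\<dots> = int q - int (theta q k u)"
    using assms(2) zmod_int[of "k * u" q]
    by (simp add: zmod_zminus1_eq_if theta_def flip: of_nat_mult)
  finally show ?thesis
    using assms(2) by (cases "q = 0") (simp_all add: theta_def of_nat_diff)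
qed

lemma coprime_multiple_in_window:
  fixes p k m :: nat
  assumes "3 \<le> p" "2 \<le> k" "k \<le> m"
  obtains j where "\<not> p dvd j" "m < k * j" "k * j \<le> 2 * m"
proof -
  define d where "d = m div k"
  have "k * d + m mod k = m" by (simp add: d_def)
  moreover have "m mod k < k" using assms(2) by simp
  ultimately have "k * d \<le> m" "m < k * d + k" by linarith+
  show thesis
  proof (cases "p dvd d + 1")
    case False
    then show thesis
      using that[of "d + 1"] \<open>k * d \<le> m\<close> \<open>m < k * d + k\<close> assms(3) by simp
  next
    case True
    then have "2 \<le> d" using assms(1) dvd_imp_le[of p "d + 1"] by simp
    then have "k * 2 \<le> k * d" by (rule mult_left_mono) simp
    with \<open>k * d \<le> m\<close> have "2 * k \<le> m" by linarith
    have "\<not> p dvd d + 2"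
    proof
      assume "p dvd d + 2"
      from this True have "p dvd (d + 2) - (d + 1)" by (rule dvd_diff_nat)
      with assms(1) show False by simp
    qed
    then show thesis
      using that[of "d + 2"] \<open>k * d \<le> m\<close> \<open>m < k * d + k\<close> \<open>2 * k \<le> m\<close>
      by (simp add: algebra_simps)
  qed
qed

lemma theta_not_closed_short_initial_segment:
  assumes "prime p" "odd p" "2 \<le> k" "k < q" "1 \<le> m" "2 * m < q"
  shows "\<not> (\<forall>u \<in> int_interval_coprime p 1 m. theta q k u \<le> m)"
proof
  assume closed: "\<forall>u \<in> int_interval_coprime p 1 m. theta q k u \<le> m"
  have "3 \<le> p"
    using prime_ge_2_nat[OF assms(1)] assms(2) by (cases "p = 2") auto
  have "1 \<in> int_interval_coprime p 1 m"
    using prime_gt_1_nat[OF assms(1)] assms(5) by (simp add: int_interval_coprime_def)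
  moreover have "theta q k 1 = k" using assms(4) by (simp add: theta_def)
  ultimately have "k \<le> m" using closed by fastforce
  obtain j where j: "\<not> p dvd j" "m < k * j" "k * j \<le> 2 * m"
    using coprime_multiple_in_window[OF \<open>3 \<le> p\<close> assms(3) \<open>k \<le> m\<close>] .
  have "1 \<le> j" using j(2) by (cases j) auto
  moreover have "2 * j \<le> k * j" using assms(3) by simp
  with j(3) have "j \<le> m" by linarith
  ultimately have "j \<in> int_interval_coprime p 1 m"
    using j(1) by (simp add: int_interval_coprime_def)
  moreover have "theta q k j = k * j" using j(3) assms(6) by (simp add: theta_def)
  ultimately show False using closed j(2) by fastforce
qed

lemma theta_no_stable_cut:
  assumes "prime p" "odd p" "p dvd q"
    and k: "k \<in> int_interval_coprime p 1 q" "k \<noteq> 1"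
    and "1 \<le> m" "m < q - 1"
    and stable: "\<forall>u \<in> int_interval_coprime p 1 q. theta q k u \<le> m \<longleftrightarrow> u \<le> m"
  shows False
proof -
  let ?S = "int_interval_coprime p 1 q"
  have "2 \<le> k" "k < q"
    using k int_interval_coprime_less[OF assms(3)] by (auto simp: int_interval_coprime_def)
  have segment_sub: "int_interval_coprime p 1 n \<subseteq> ?S" if "n \<le> q" for n
    using that by (auto simp: int_interval_coprime_def)
  show False
  proof (cases "2 * m < q")
    case True
    have "\<forall>u \<in> int_interval_coprime p 1 m. theta q k u \<le> m"
      using stable segment_sub[of m] assms(7) by (auto simp: int_interval_coprime_def)
    with theta_not_closed_short_initial_segment[OF assms(1,2) \<open>2 \<le> k\<close> \<open>k < q\<close> assms(6) True]
    show False by contradiction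
  next
    case False
    define m' where "m' = q - 1 - m"
    have "\<forall>u \<in> int_interval_coprime p 1 m'. theta q k u \<le> m'"
    proof
      fix u assume "u \<in> int_interval_coprime p 1 m'"
      then have u: "u \<in> ?S" "u \<le> m'"
        using segment_sub[of m'] by (auto simp: m'_def int_interval_coprime_def)
      have "theta q k u \<in> ?S" using theta_in_int_interval_coprime[OF assms(1,3) k(1) u(1)] .
      then have "theta q k u < q" "theta q k u \<noteq> 0"
        using int_interval_coprime_less[OF assms(3)] by (auto simp: int_interval_coprime_def)
      have "m < q - u" using u(2) assms(7) by (simp add: m'_def)
      then have "\<not> theta q k (q - u) \<le> m"
        using stable int_interval_coprime_reflect[OF assms(3) u(1)] by auto
      then show "theta q k u \<le> m'"
        using theta_reflect[of u q k] \<open>theta q k u < q\<close> \<open>theta q k u \<noteq> 0\<close>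
          int_interval_coprime_less[OF assms(3) u(1)] by (simp add: m'_def)
    qed
    moreover have "1 \<le> m'" "2 * m' < q" using False assms(7) by (auto simp: m'_def)
    ultimately show False
      using theta_not_closed_short_initial_segment[OF assms(1,2) \<open>2 \<le> k\<close> \<open>k < q\<close>] by blast
  qed
qed

lemma monotone_on_level_set_of_least:
  fixes f :: "'a::linorder \<Rightarrow> 'b::order"
  assumes "monotone_on A (\<le>) (\<le>) f" "finite A" "a \<in> A" "\<forall>u \<in> A. a \<le> u"
  obtains m where "m \<in> A" "\<forall>u \<in> A. f u = f a \<longleftrightarrow> u \<le> m"
proof -
  let ?L = "{u \<in> A. f u = f a}"
  have "Max ?L \<in> ?L" using assms(2,3) by (intro Max_in) auto
  moreover have "f u = f a" if "u \<in> A" "u \<le> Max ?L" for u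
  proof (rule order_antisym)
    show "f u \<le> f a"
      using monotone_onD[OF assms(1) that(1) _ that(2)] \<open>Max ?L \<in> ?L\<close> by simp
    show "f a \<le> f u"
      using monotone_onD[OF assms(1) assms(3) that(1)] assms(4) that(1) by simp
  qed
  moreover have "u \<le> Max ?L" if "u \<in> A" "f u = f a" for u
    using Max_ge[of ?L u] assms(2) that by simp
  ultimately show thesis
    using that[of "Max ?L"] by blast
qed

lemma mono_theta_invariant_imp_constant:
  fixes f :: "nat \<Rightarrow> real"
  assumes "prime p" "odd p" "p dvd q"
    and k: "k \<in> int_interval_coprime p 1 q" "k \<noteq> 1"
    and mono: "monotone_on (int_interval_coprime p 1 q) (\<le>) (\<le>) f"
    and inv: "\<forall>u \<in> int_interval_coprime p 1 q. f (theta q k u) = f u"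
  shows "\<forall>u \<in> int_interval_coprime p 1 q. \<forall>v \<in> int_interval_coprime p 1 q. f u = f v"
proof (rule ccontr)
  let ?S = "int_interval_coprime p 1 q"
  assume nonconst: "\<not> (\<forall>u \<in> ?S. \<forall>v \<in> ?S. f u = f v)"
  have "finite ?S" by (rule finite_subset[of _ "{..q}"]) (auto simp: int_interval_coprime_def)
  have "1 \<in> ?S"
    using k(1) assms(1) by (auto simp: int_interval_coprime_def)
  moreover have "\<forall>u \<in> ?S. 1 \<le> u" by (simp add: int_interval_coprime_def)
  ultimately obtain m where "m \<in> ?S" and level: "\<forall>u \<in> ?S. f u = f 1 \<longleftrightarrow> u \<le> m"
    using monotone_on_level_set_of_least[OF mono \<open>finite ?S\<close>] by blast
  have "m < q - 1"
  proof (rule ccontr)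
    assume "\<not> m < q - 1"
    then have "\<forall>u \<in> ?S. f u = f 1"
      using level int_interval_coprime_less[OF assms(3)] by fastforce
    with nonconst show False by metis
  qed
  moreover have "theta q k u \<le> m \<longleftrightarrow> u \<le> m" if "u \<in> ?S" for u
  proof -
    have "theta q k u \<in> ?S" using theta_in_int_interval_coprime[OF assms(1,3) k(1) that] .
    then have "theta q k u \<le> m \<longleftrightarrow> f (theta q k u) = f 1" using level by simp
    also have "\<dots> \<longleftrightarrow> u \<le> m" using inv level that by simp
    finally show ?thesis .
  qed
  moreover have "1 \<le> m" using \<open>m \<in> ?S\<close> by (simp add: int_interval_coprime_def)
  ultimately show False using theta_no_stable_cut[OF assms(1-3) k] by blast
qed

theorem lemma4p2:
  fixes p r q k :: nat and f :: "nat \<Rightarrow> real"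
  assumes "prime p" and "odd p" and "r \<ge> 1" and "q = p ^ r"
    and "k \<in> int_interval_coprime p 1 q"
    and "monotone_on (int_interval_coprime p 1 q) (\<le>) (\<le>) f
         \<or> monotone_on (int_interval_coprime p 1 q) (\<le>) (\<ge>) f"
  shows "(\<forall>u \<in> int_interval_coprime p 1 q. f (theta q k u) = f u)
     \<longleftrightarrow> (k = 1 \<or> (\<forall>u \<in> int_interval_coprime p 1 q. \<forall>v \<in> int_interval_coprime p 1 q. f u = f v))"
proof -
  let ?S = "int_interval_coprime p 1 q"
  have "p dvd q" using assms(3,4) by (simp add: dvd_power)
  have "\<forall>u \<in> ?S. \<forall>v \<in> ?S. f u = f v"
    if inv: "\<forall>u \<in> ?S. f (theta q k u) = f u" and "k \<noteq> 1"
  proof -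
    note mono_imp_constant =
      mono_theta_invariant_imp_constant[OF assms(1,2) \<open>p dvd q\<close> assms(5) \<open>k \<noteq> 1\<close>]
    show ?thesis
    proof (cases "monotone_on ?S (\<le>) (\<le>) f")
      case True
      then show ?thesis using inv by (rule mono_imp_constant)
    next
      case False
      with assms(6) have "monotone_on ?S (\<le>) (\<le>) (\<lambda>u. - f u)"
        by (auto simp: monotone_on_def)
      moreover have "\<forall>u \<in> ?S. - f (theta q k u) = - f u" using inv by simp
      ultimately have "\<forall>u \<in> ?S. \<forall>v \<in> ?S. - f u = - f v" by (rule mono_imp_constant)
      then show ?thesis by (simp only: neg_equal_iff_equal)
    qed
  qed
  moreover have "f (theta q k u) = f u"
    if "k = 1 \<or> (\<forall>u \<in> ?S. \<forall>v \<in> ?S. f u = f v)" and u: "u \<in> ?S" for u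
  proof (cases "k = 1")
    case True
    then show ?thesis using int_interval_coprime_less[OF \<open>p dvd q\<close> u] by (simp add: theta_def)
  next
    case False
    then show ?thesis
      using that theta_in_int_interval_coprime[OF assms(1) \<open>p dvd q\<close> assms(5) u] by blast
  qed
  ultimately show ?thesis by blast
qed

end
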